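(* Let $E,m>0$, $\ell_z\in\mathbb{R}$, $\ell\ge 0$, and let $(x,p)\in\Gamma$ be a point with $F_0(x,p)=\tfrac12m^2$, $F_1(x,p)=E$, $F_2(x,p)=\ell_z$, $F_3(x,p)=\ell^2$, where $x$ has radial coordinate $r$. Then the differentials $dF_0,dF_1,dF_2,dF_3$ at $(x,p)$ are linearly independent, unless one of the following two cases occurs: (a) $|\ell_z|=\ell$ (motion confined to the equatorial plane); (b) $V_{m,\ell}(r)=E^2$ and $\frac{d}{dr}V_{m,\ell}(r)=0$ (circular trajectories).
   Context: Fix $M_H>0$. Let $M$ be the region of the extended Schwarzschild spacetime covered by horizon-penetrating coordinates $(t,r,\vartheta,\varphi)$, $t\in\mathbb{R}$, $r>0$, in which the inverse metric is $g^{-1}=-(1+\tfrac{2M_H}{r})\partial_t\otimes\partial_t+\tfrac{4M_H}{r}\partial_t\otimes_s\partial_r+(1-\tfrac{2M_H}{r})\partial_r\otimes\partial_r+\tfrac{1}{r^2}(\partial_\vartheta\otimes\partial_\vartheta+\tfrac{1}{\sin^2\vartheta}\partial_\varphi\otimes\partial_\varphi)$. On $T^*M$ use adapted coordinates $(x^\mu,p_\mu)$ with $p=p_\mu dx^\mu$. The free-particle Hamiltonian is $H=\tfrac12 g^{\mu\nu}p_\mu p_\nu$; $\Gamma$ is the set of $(x,p)\in T^*M$ with $p$ timelike and future-directed. Define $F_0=-H$, $F_1=-p_t$, $F_2=p_\varphi$, $F_3=p_\vartheta^2+p_\varphi^2/\sin^2\vartheta$, and $V_{m,\ell}(r)=(1-2M_H/r)(m^2+\ell^2/r^2)$.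 *)

theory Defs
  imports "HOL-Analysis.Analysis"
begin

text \<open>A point of the cotangent bundle in adapted coordinates:
  ((t, r, theta, phi), (p_t, p_r, p_theta, p_phi)).\<close>
type_synonym phase_point = "(real \<times> real \<times> real \<times> real) \<times> (real \<times> real \<times> real \<times> real)"

text \<open>Inverse metric g^{-1}(p,q) at a point with radial coordinate r and polar angle th.
  The symmetrised product is a \<otimes>_s b = (a\<otimes>b + b\<otimes>a)/2, so g^{tr} = 2 MH / r.\<close>
definition ginv :: "real \<Rightarrow> real \<Rightarrow> real \<Rightarrow> real \<times> real \<times> real \<times> real \<Rightarrow> real \<times> real \<times> real \<times> real \<Rightarrow> real" where
  "ginv MH r th p q = (case p of (pt, pr, pth, pph) \<Rightarrow> case q of (qt, qr, qth, qph) \<Rightarrow>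
      - (1 + 2 * MH / r) * pt * qt + (2 * MH / r) * (pt * qr + pr * qt)
      + (1 - 2 * MH / r) * pr * qr + (1 / r^2) * (pth * qth + pph * qph / (sin th)^2))"

definition radial :: "phase_point \<Rightarrow> real" where
  "radial z = fst (snd (fst z))"

definition polar :: "phase_point \<Rightarrow> real" where
  "polar z = fst (snd (snd (fst z)))"

definition Ham :: "real \<Rightarrow> phase_point \<Rightarrow> real" where
  "Ham MH z = ginv MH (radial z) (polar z) (snd z) (snd z) / 2"

text \<open>Gamma: p timelike and future-directed; future-directed means that the vector
  p^sharp satisfies dt(p^sharp) = g^{-1}(p, dt) > 0 (t increases to the future).\<close>
definition Gamma :: "real \<Rightarrow> phase_point set" where
  "Gamma MH = {z. radial z > 0 \<and> 0 < polar z \<and> polar z < pi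
      \<and> ginv MH (radial z) (polar z) (snd z) (snd z) < 0
      \<and> ginv MH (radial z) (polar z) (snd z) (1, 0, 0, 0) > 0}"

definition F0 :: "real \<Rightarrow> phase_point \<Rightarrow> real" where
  "F0 MH z = - Ham MH z"

definition F1 :: "phase_point \<Rightarrow> real" where
  "F1 z = - fst (snd z)"

definition F2 :: "phase_point \<Rightarrow> real" where
  "F2 z = snd (snd (snd (snd z)))"

definition F3 :: "phase_point \<Rightarrow> real" where
  "F3 z = (case snd z of (pt, pr, pth, pph) \<Rightarrow> pth^2 + pph^2 / (sin (polar z))^2)"

definition V :: "real \<Rightarrow> real \<Rightarrow> real \<Rightarrow> real \<Rightarrow> real" where
  "V MH m l r = (1 - 2 * MH / r) * (m^2 + l^2 / r^2)"

end

theory Submission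
  imports Defs
begin

text \<open>In a vanishing combination c0 dF0 + c1 dF1 + c2 dF2 + c3 dF3, the r- and p_r-components
  only see dF0, so c0 \<noteq> 0 makes (r, p_r) a critical point of the radial motion, which on the
  mass shell F0 = m^2/2 is a circular orbit: V = E^2 and V' = 0. Once c0 = 0, the theta- and
  p_theta-components only see dF3, and c3 \<noteq> 0 forces p_theta = 0 and p_phi^2 cos theta = 0,
  i.e. l = |l_z|. The p_t- and p_phi-components then give c1 = c2 = 0.\<close>

lemma F0_eq: "F0 MH z = -( -(1+2*MH/fst(snd(fst z)))*(fst(snd z))^2
   + (4*MH/fst(snd(fst z)))*fst(snd z)*fst(snd(snd z))
   + (1-2*MH/fst(snd(fst z)))*(fst(snd(snd z)))^2
   + (1/(fst(snd(fst z)))^2)*((fst(snd(snd(snd z))))^2 + (snd(snd(snd(snd z))))^2/(sin (fst(snd(snd(fst z)))))^2))/2"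
  by (cases z) (simp add: F0_def Ham_def ginv_def radial_def polar_def power2_eq_square
      add_divide_distrib diff_divide_distrib ring_distribs)

lemma F0_coords: "F0 MH ((t,r,th,ph),(pt,pr,pth,pph)) =
   -( -(1+2*MH/r)*pt^2 + (4*MH/r)*pt*pr + (1-2*MH/r)*pr^2 + (pth^2 + pph^2/(sin th)^2)/r^2)/2"
  by (simp add: F0_eq)

lemma F3_eq: "F3 z = (fst(snd(snd(snd z))))^2 + (snd(snd(snd(snd z))))^2/(sin (fst(snd(snd(fst z)))))^2"
  by (cases z) (auto simp: F3_def polar_def)

lemma has_derivative_F0:
  assumes "r \<noteq> 0" "sin th \<noteq> 0"
  shows "(F0 MH has_derivative (\<lambda>((dt,dr,dth,dph),(dpt,dpr,dpth,dpph)). -(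
      dr * ((2*MH/r^2)*(pt - pr)^2 - 2*(pth^2 + pph^2/(sin th)^2)/r^3)
    - dth * 2*pph^2*cos th/((sin th)^3*r^2)
    + dpt * (-2*(1+2*MH/r)*pt + (4*MH/r)*pr)
    + dpr * ((4*MH/r)*pt + 2*(1-2*MH/r)*pr)
    + dpth * 2*pth/r^2
    + dpph * 2*pph/(r^2*(sin th)^2))/2)) (at ((t,r,th,ph),(pt,pr,pth,pph)))"
  unfolding F0_eq[abs_def]
  apply (rule has_derivative_eq_rhs)
   apply (rule derivative_eq_intros refl | simp add: assms)+
  using assms
  apply (auto simp: fun_eq_iff split_beta field_simps power2_eq_square power3_eq_cube)
  done

lemma has_derivative_F1: "(F1 has_derivative (\<lambda>v. - fst (snd v))) (at z)"
  unfolding F1_def[abs_def] by (rule derivative_eq_intros refl)+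

lemma has_derivative_F2: "(F2 has_derivative (\<lambda>v. snd (snd (snd (snd v))))) (at z)"
  unfolding F2_def[abs_def] by (rule derivative_eq_intros refl)+

lemma has_derivative_F3:
  assumes "sin th \<noteq> 0"
  shows "(F3 has_derivative (\<lambda>((dt,dr,dth,dph),(dpt,dpr,dpth,dpph)).
      2*pth*dpth + 2*pph*dpph/(sin th)^2 - 2*pph^2*cos th*dth/(sin th)^3))
    (at ((t,r,th,ph),(pt,pr,pth,pph)))"
  unfolding F3_eq[abs_def]
  apply (rule has_derivative_eq_rhs)
   apply (rule derivative_eq_intros refl | simp add: assms)+
  using assms
  apply (auto simp: fun_eq_iff split_beta field_simps power2_eq_square power3_eq_cube)
  done

lemma has_real_derivative_V:
  assumes "r \<noteq> 0"
  shows "(V MH m l has_real_derivative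
     (2*MH/r^2)*(m^2 + l^2/r^2) - (1 - 2*MH/r)*(2*l^2/r^3)) (at r)"
  unfolding V_def[abs_def]
  apply (rule DERIV_cong)
   apply (rule derivative_eq_intros refl | simp add: assms)+
  using assms
  apply (auto simp: field_simps eval_nat_numeral)
  done

lemma radial_critical_point_is_circular:
  fixes MH m l E pr r :: real
  assumes "r > 0" "MH > 0" "E > 0"
    and energy: "(1 + 2*MH/r)*E^2 + (4*MH/r)*E*pr - (1 - 2*MH/r)*pr^2 = m^2 + l^2/r^2"
    and d_r: "(MH/r^2)*(E + pr)^2 = l^2/r^3"
    and d_pr: "(1 - 2*MH/r)*pr = (2*MH/r)*E"
  shows "V MH m l r = E^2 \<and> deriv (V MH m l) r = 0"
proof -
  txt \<open>With f = 1 - 2MH/r the p_r-equation reads f (E + p_r) = E; this turns the energy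
    equation into f (m^2 + l^2/r^2) = E^2 and the r-equation into f V' = 0.\<close>
  define a where "a = 2*MH/r"
  define f where "f = 1 - a"
  have "a > 0" using assms(1,2) by (simp add: a_def)
  have fpr: "f*pr = a*E" using d_pr by (simp add: a_def f_def)
  have VE: "f*(m^2 + l^2/r^2) = E^2"
  proof -
    have "f*(m^2 + l^2/r^2) = f*(1+a)*E^2 + 2*a*E*(f*pr) - (f*pr)^2"
      unfolding energy[symmetric] a_def f_def using assms(1) by (simp add: field_simps power2_eq_square)
    also have "\<dots> = E^2" by (simp only: fpr) (simp add: f_def algebra_simps power2_eq_square)
    finally show ?thesis .
  qed
  have "f \<noteq> 0" using fpr \<open>a > 0\<close> assms(3) by auto
  have "f*(E + pr) = E" using fpr by (simp add: f_def algebra_simps)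
  then have "a/r*E^2 = f^2*(a/r*(E + pr)^2)"
    by (metis mult.left_commute power_mult_distrib)
  also have "a/r*(E + pr)^2 = 2*l^2/r^3"
    using d_r assms(1) by (simp add: a_def field_simps power2_eq_square)
  finally have K: "a/r*E^2 = f^2*(2*l^2/r^3)" .
  define V' where "V' = (2*MH/r^2)*(m^2 + l^2/r^2) - (1 - 2*MH/r)*(2*l^2/r^3)"
  have "f*V' = a/r*(f*(m^2 + l^2/r^2)) - f^2*(2*l^2/r^3)"
    unfolding V'_def a_def f_def using assms(1) by (simp add: field_simps power2_eq_square)
  also have "\<dots> = 0" unfolding VE K by simp
  finally have "V' = 0" using \<open>f \<noteq> 0\<close> by simp
  moreover have "deriv (V MH m l) r = V'"
    unfolding V'_def by (rule DERIV_imp_deriv[OF has_real_derivative_V]) (use assms(1) in simp)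
  moreover have "V MH m l r = E^2"
    using VE by (simp add: V_def f_def a_def)
  ultimately show ?thesis by simp
qed

lemma equatorial_of_angular_critical_point:
  fixes th pth pph l :: real
  assumes "0 < th" "th < pi" "l \<ge> 0"
    and "pth^2 + pph^2/(sin th)^2 = l^2"
    and "pth = 0" "pph^2 * cos th = 0"
  shows "\<bar>pph\<bar> = l"
proof -
  have "pph^2/(sin th)^2 = pph^2"
  proof (cases "pph = 0")
    case False
    then have "cos th = 0" using assms(6) by simp
    then show ?thesis using sin_cos_squared_add[of th] by simp
  qed simp
  then have "pph^2 = l^2" using assms(4,5) by simp
  then show ?thesis using assms(3) by (auto simp: power2_eq_iff)
qed

lemma vanishing_combination_of_differentials:
  fixes c0 c1 c2 c3 :: real
  assumes z: "z = ((t,r,th,ph),(pt,pr,pth,pph))" and "r \<noteq> 0" "sin th \<noteq> 0"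
    and comb: "\<forall>v. c0 * frechet_derivative (F0 MH) (at z) v + c1 * frechet_derivative F1 (at z) v
                 + c2 * frechet_derivative F2 (at z) v + c3 * frechet_derivative F3 (at z) v = 0"
  shows "c0 * ((2*MH/r^2)*(pt - pr)^2 - 2*(pth^2 + pph^2/(sin th)^2)/r^3) = 0"
    and "c0 * ((4*MH/r)*pt + 2*(1 - 2*MH/r)*pr) = 0"
    and "2*c1 = c0 * (2*(1 + 2*MH/r)*pt - (4*MH/r)*pr)"
    and "c0 * pth/r^2 = 2*c3*pth"
    and "c0 * pph^2*cos th/((sin th)^3*r^2) = 2*c3*pph^2*cos th/(sin th)^3"
    and "c2 = c0 * pph/(r^2*(sin th)^2) - 2*c3*pph/(sin th)^2"
proof -
  note D = frechet_derivative_at[OF has_derivative_F0[OF assms(2,3)], symmetric]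
    frechet_derivative_at[OF has_derivative_F1, symmetric]
    frechet_derivative_at[OF has_derivative_F2, symmetric]
    frechet_derivative_at[OF has_derivative_F3[OF assms(3)], symmetric]
  note C = spec[OF comb[unfolded z D]]
  show "c0 * ((2*MH/r^2)*(pt - pr)^2 - 2*(pth^2 + pph^2/(sin th)^2)/r^3) = 0"
    using C[where x="((0,1,0,0),(0,0,0,0))"] by (auto simp: right_diff_distrib)
  show "c0 * ((4*MH/r)*pt + 2*(1 - 2*MH/r)*pr) = 0"
    using C[where x="((0,0,0,0),(0,1,0,0))"] by (auto simp: algebra_simps)
  show "2*c1 = c0 * (2*(1 + 2*MH/r)*pt - (4*MH/r)*pr)"
    using C[where x="((0,0,0,0),(1,0,0,0))"] by (auto simp: algebra_simps)
  show "c0 * pth/r^2 = 2*c3*pth"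
    using C[where x="((0,0,0,0),(0,0,1,0))"] by (simp add: field_simps)
  show "c0 * pph^2*cos th/((sin th)^3*r^2) = 2*c3*pph^2*cos th/(sin th)^3"
    using C[where x="((0,0,1,0),(0,0,0,0))"] by (auto simp: algebra_simps)
  show "c2 = c0 * pph/(r^2*(sin th)^2) - 2*c3*pph/(sin th)^2"
    using C[where x="((0,0,0,0),(0,0,0,1))"] by (auto simp: algebra_simps)
qed

lemma differentials_independent_in_coordinates:
  fixes c0 c1 c2 c3 :: real
  assumes z: "z = ((t,r,th,ph),(-E,pr,pth,pph))"
    and "MH > 0" "E > 0" "l \<ge> 0" "r > 0" and th: "0 < th" "th < pi"
    and energy: "(1 + 2*MH/r)*E^2 + (4*MH/r)*E*pr - (1 - 2*MH/r)*pr^2 = m^2 + l^2/r^2"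
    and ang: "pth^2 + pph^2/(sin th)^2 = l^2"
    and not_equatorial: "\<bar>pph\<bar> \<noteq> l"
    and not_circular: "\<not> (V MH m l r = E^2 \<and> deriv (V MH m l) r = 0)"
    and comb: "\<forall>v. c0 * frechet_derivative (F0 MH) (at z) v + c1 * frechet_derivative F1 (at z) v
                 + c2 * frechet_derivative F2 (at z) v + c3 * frechet_derivative F3 (at z) v = 0"
  shows "c0 = 0 \<and> c1 = 0 \<and> c2 = 0 \<and> c3 = 0"
proof -
  have sin: "sin th \<noteq> 0" using th sin_gt_zero by force
  have "r \<noteq> 0" using \<open>r > 0\<close> by simp
  note D = vanishing_combination_of_differentials[OF z this sin comb]
  have c0: "c0 = 0"
  proof (rule ccontr)
    assume "c0 \<noteq> 0"
    then have "(2*MH/r^2)*(-E - pr)^2 = 2*l^2/r^3" "(4*MH/r)*E = 2*(1 - 2*MH/r)*pr"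
      using D(1,2) \<open>r > 0\<close> unfolding ang by auto
    then have "(MH/r^2)*(E + pr)^2 = l^2/r^3" "(1 - 2*MH/r)*pr = (2*MH/r)*E"
      using \<open>r > 0\<close> by (simp_all add: power2_commute field_simps add.commute)
    with energy not_circular show False
      using radial_critical_point_is_circular \<open>r > 0\<close> assms(2,3) by blast
  qed
  have c3: "c3 = 0"
  proof (rule ccontr)
    assume "c3 \<noteq> 0"
    then have "pth = 0" "pph^2 * cos th = 0"
      using D(4,5) \<open>r > 0\<close> sin c0 by auto
    with not_equatorial show False
      using equatorial_of_angular_critical_point[OF th assms(4) ang] by simp
  qed
  show ?thesis using D(3,6) \<open>r > 0\<close> c0 c3 by simp
qed

theorem lemma2:
  fixes MH E m lz l :: real and z :: phase_point
  assumes "MH > 0" "E > 0" "m > 0" "l \<ge> 0"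
    and "z \<in> Gamma MH"
    and "F0 MH z = m^2 / 2" "F1 z = E" "F2 z = lz" "F3 z = l^2"
    and not_equatorial: "\<bar>lz\<bar> \<noteq> l"
    and not_circular: "\<not> (V MH m l (radial z) = E^2 \<and> deriv (V MH m l) (radial z) = 0)"
  shows "F0 MH differentiable at z \<and> F1 differentiable at z \<and>
         F2 differentiable at z \<and> F3 differentiable at z \<and>
         (\<forall>c0 c1 c2 c3 :: real.
            (\<forall>v. c0 * frechet_derivative (F0 MH) (at z) v + c1 * frechet_derivative F1 (at z) v
                 + c2 * frechet_derivative F2 (at z) v + c3 * frechet_derivative F3 (at z) v = 0)
            \<longrightarrow> c0 = 0 \<and> c1 = 0 \<and> c2 = 0 \<and> c3 = 0)"
proof -
  obtain t r th ph pt pr pth pph where z: "z = ((t,r,th,ph),(pt,pr,pth,pph))"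
    by (metis prod.collapse)
  have r: "r > 0" and th: "0 < th" "th < pi"
    using assms(5) by (auto simp: Gamma_def z radial_def polar_def)
  then have sin: "sin th \<noteq> 0" using sin_gt_zero by force
  have pt: "pt = -E" and pph: "pph = lz" and ang: "pth^2 + pph^2/(sin th)^2 = l^2"
    using assms(7-9) by (simp_all add: F1_def F2_def F3_eq z)
  have energy: "(1 + 2*MH/r)*E^2 + (4*MH/r)*E*pr - (1 - 2*MH/r)*pr^2 = m^2 + l^2/r^2"
    using assms(6) r unfolding z F0_coords ang pt by (simp add: field_simps)
  have "F0 MH differentiable at z \<and> F1 differentiable at z \<and>
        F2 differentiable at z \<and> F3 differentiable at z"
    unfolding z using r sin
    by (blast intro: differentiableI has_derivative_F0 has_derivative_F1 has_derivative_F2 has_derivative_F3)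
  moreover have "radial z = r" by (simp add: z radial_def)
  ultimately show ?thesis
    using differentials_independent_in_coordinates[OF z[unfolded pt] assms(1,2,4) r th energy ang,
        unfolded pph] not_equatorial not_circular by blast
qed

end
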